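(* Consider the iterates $x_k,y_k,u_k$ of the mirror triangle method with inexact directional derivatives (see context). For every $k\ge0$, $x_{k+1}$ and $y_{k+1}$ are convex combinations of $u_0,\dots,u_{k+1}$. Moreover $x_{k+1}=\sum_{l=0}^{k+1}\gamma_{k+1}^lu_l$, where $\gamma_0^0=1$, $\gamma_1^0=0$, $\gamma_1^1=1$, and for $k\ge1$ $$\gamma_{k+1}^l=\begin{cases}\big(1-\frac{\alpha_{k+1}}{A_{k+1}}\big)\gamma_k^l,& l=0,\dots,k-1,\\ \frac{\alpha_{k+1}}{A_{k+1}}\big(1-n\frac{\alpha_k}{A_k}\big)+n\big(\frac{\alpha_k}{A_k}-\frac{\alpha_{k+1}}{A_{k+1}}\big),& l=k,\\ n\frac{\alpha_{k+1}}{A_{k+1}},& l=k+1.\end{cases}$$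
   Context: Here $n\ge1$ is the dimension of $\mathbb{R}^n$ and $\|x\|_L^2=L\sum_ix_i^2$ for some $L>0$. The method: $x_0=u_0=y_0\in\mathbb{R}^n$, $\alpha_0=1-\frac1n$, $A_0=\alpha_0$; for $k\ge0$: $\alpha_{k+1}=\frac{k+2n}{2n^2}$, $A_{k+1}=A_k+\alpha_{k+1}$, $y_{k+1}=\frac{\alpha_{k+1}u_k+A_kx_k}{A_{k+1}}$, $u_{k+1}=\arg\min_{x\in\mathbb{R}^n}\{\frac12\|x-u_k\|_L^2+\alpha_{k+1}\langle g_{k+1},x\rangle\}$ for some vector $g_{k+1}$ (in the method, $g_{k+1}=n(\langle\nabla f(y_{k+1}),e_{k+1}\rangle+\tilde\delta_{k+1})e_{k+1}$), and $x_{k+1}=y_{k+1}+n\frac{\alpha_{k+1}}{A_{k+1}}(u_{k+1}-u_k)$. *)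

theory Defs
  imports "HOL-Analysis.Analysis"
begin

fun mtm_alpha :: "nat \<Rightarrow> nat \<Rightarrow> real" where
  "mtm_alpha n 0 = 1 - 1 / real n"
| "mtm_alpha n (Suc k) = (real k + 2 * real n) / (2 * (real n)^2)"

fun mtm_A :: "nat \<Rightarrow> nat \<Rightarrow> real" where
  "mtm_A n 0 = mtm_alpha n 0"
| "mtm_A n (Suc k) = mtm_A n k + mtm_alpha n (Suc k)"

text \<open>Coefficients gamma_k^l (set to 0 for l > k, where the paper leaves them undefined).\<close>

fun mtm_gamma :: "nat \<Rightarrow> nat \<Rightarrow> nat \<Rightarrow> real" where
  "mtm_gamma n 0 l = (if l = 0 then 1 else 0)"
| "mtm_gamma n (Suc 0) l = (if l = 1 then 1 else 0)"
| "mtm_gamma n (Suc (Suc k)) l =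
     (let k' = Suc k;
          r' = mtm_alpha n (Suc k') / mtm_A n (Suc k');
          r = mtm_alpha n k' / mtm_A n k'
      in if l < k' then (1 - r') * mtm_gamma n k' l
         else if l = k' then r' * (1 - real n * r) + real n * (r - r')
         else if l = Suc k' then real n * r'
         else 0)"

end

theory Submission
  imports Defs
begin

text \<open>With \<open>r\<^sub>k = \<alpha>\<^sub>k / A\<^sub>k\<close>, the update of \<open>y\<close> and \<open>x\<close> reads
  \<open>x\<^sub>k\<^sub>+\<^sub>1 = (1 - r\<^sub>k\<^sub>+\<^sub>1) x\<^sub>k + r\<^sub>k\<^sub>+\<^sub>1 u\<^sub>k + n r\<^sub>k\<^sub>+\<^sub>1 (u\<^sub>k\<^sub>+\<^sub>1 - u\<^sub>k)\<close>, so unrolling it gives the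
  coefficients \<open>\<gamma>\<close>. They are nonnegative because \<open>n r\<^sub>k \<le> 1\<close> and \<open>r\<^sub>k\<close> decreases, and they
  sum to one because the recursion preserves affine combinations.\<close>

definition mtm_ratio :: "nat \<Rightarrow> nat \<Rightarrow> real" where
  "mtm_ratio n k = mtm_alpha n k / mtm_A n k"

lemma mtm_A_Suc_eq:
  assumes "n > 0"
  shows "mtm_A n (Suc k) = ((real k + 2 * real n)^2 + real k) / (4 * (real n)^2)"
proof (induction k)
  case 0
  show ?case using assms by (simp add: field_simps power2_eq_square)
next
  case (Suc k)
  have "mtm_A n (Suc (Suc k)) = mtm_A n (Suc k) + mtm_alpha n (Suc (Suc k))"
    by (simp only: mtm_A.simps)
  also have "\<dots> = ((real (Suc k) + 2 * real n)^2 + real (Suc k)) / (4 * (real n)^2)"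
    unfolding Suc.IH using assms by (simp add: field_simps power2_eq_square)
  finally show ?case .
qed

lemma mtm_ratio_Suc_eq:
  assumes "n > 0"
  shows "mtm_ratio n (Suc k) = 2 * (real k + 2 * real n) / ((real k + 2 * real n)^2 + real k)"
proof -
  define m where "m = real k + 2 * real n"
  have "mtm_ratio n (Suc k) = (m / (2 * (real n)^2)) / ((m^2 + real k) / (4 * (real n)^2))"
    unfolding mtm_ratio_def mtm_A_Suc_eq[OF assms] by (simp add: m_def)
  also have "\<dots> = 2 * m / (m^2 + real k)"
    using assms by (simp add: field_simps)
  finally show ?thesis
    by (simp add: m_def)
qed

lemma mtm_A_Suc_pos: "n > 0 \<Longrightarrow> mtm_A n (Suc k) > 0"
  by (simp only: mtm_A_Suc_eq) (simp add: add_pos_nonneg)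

lemma mtm_ratio_Suc_nonneg: "n > 0 \<Longrightarrow> mtm_ratio n (Suc k) \<ge> 0"
  by (simp add: mtm_ratio_Suc_eq)

lemma mtm_ratio_1: "n > 0 \<Longrightarrow> real n * mtm_ratio n (Suc 0) = 1"
  using mtm_ratio_Suc_eq[of n 0] by (simp add: power2_eq_square)

lemma mtm_ratio_Suc_le:
  assumes "n > 0"
  shows "real n * mtm_ratio n (Suc k) \<le> 1"
proof -
  define m where "m = real k + 2 * real n"
  have "m^2 + real k - 2 * real n * m = real k * (m + 1)"
    by (simp add: m_def algebra_simps power2_eq_square)
  moreover have "0 \<le> real k * (m + 1)"
    by (simp add: m_def)
  ultimately have "real n * (2 * m) \<le> m^2 + real k"
    by linarith
  moreover have "m^2 + real k > 0"
    using assms by (simp add: m_def add_pos_nonneg)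
  moreover have "mtm_ratio n (Suc k) = 2 * m / (m^2 + real k)"
    using assms by (simp add: mtm_ratio_Suc_eq m_def)
  ultimately show ?thesis
    by (simp only:) (simp add: field_simps)
qed

lemma mtm_ratio_Suc_le_1:
  assumes "n > 0"
  shows "mtm_ratio n (Suc k) \<le> 1"
proof -
  have "1 * mtm_ratio n (Suc k) \<le> real n * mtm_ratio n (Suc k)"
    using assms mtm_ratio_Suc_nonneg[OF assms] by (intro mult_right_mono) auto
  then show ?thesis
    using mtm_ratio_Suc_le[OF assms, of k] by linarith
qed

lemma mtm_ratio_Suc_antimono:
  assumes "n > 0"
  shows "mtm_ratio n (Suc (Suc k)) \<le> mtm_ratio n (Suc k)"
proof -
  define m where "m = real k + 2 * real n"
  have m: "m \<ge> real k" "m > 0"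
    using assms by (simp_all add: m_def)
  have key: "(m + 1) * (m^2 + real k) \<le> m * ((m + 1)^2 + (real k + 1))"
  proof -
    have "real k \<le> m * m + 2 * m"
      using m mult_nonneg_nonneg[of m m] by linarith
    then show ?thesis
      by (simp add: algebra_simps power2_eq_square)
  qed
  have pos: "m^2 + real k > 0" "(m + 1)^2 + (real k + 1) > 0"
    using m by (simp_all add: add_pos_nonneg)
  have "mtm_ratio n (Suc k) = 2 * m / (m^2 + real k)"
    "mtm_ratio n (Suc (Suc k)) = 2 * (m + 1) / ((m + 1)^2 + (real k + 1))"
    using assms by (simp_all add: mtm_ratio_Suc_eq m_def add_ac)
  then show ?thesis
    using key pos by (simp only:) (simp add: field_simps)
qed

lemma mtm_gamma_Suc_Suc:
  "mtm_gamma n (Suc (Suc k)) l =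
    (if l \<le> k then (1 - mtm_ratio n (Suc (Suc k))) * mtm_gamma n (Suc k) l
     else if l = Suc k then mtm_ratio n (Suc (Suc k)) * (1 - real n * mtm_ratio n (Suc k))
       + real n * (mtm_ratio n (Suc k) - mtm_ratio n (Suc (Suc k)))
     else if l = Suc (Suc k) then real n * mtm_ratio n (Suc (Suc k))
     else 0)"
  by (simp add: mtm_ratio_def Let_def less_Suc_eq_le)

declare mtm_gamma.simps(3) [simp del]

lemma mtm_gamma_diag: "n > 0 \<Longrightarrow> mtm_gamma n (Suc k) (Suc k) = real n * mtm_ratio n (Suc k)"
  by (cases k) (simp_all add: mtm_gamma_Suc_Suc mtm_ratio_1)

lemma mtm_gamma_nonneg:
  assumes "n > 0"
  shows "0 \<le> mtm_gamma n k l"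
proof (induction k arbitrary: l rule: induct_nat_012)
  case (ge2 k)
  define r where "r = mtm_ratio n (Suc k)"
  define r' where "r' = mtm_ratio n (Suc (Suc k))"
  have "0 \<le> r'" "r' \<le> 1" "real n * r \<le> 1" "r' \<le> r"
    using assms by (simp_all add: r_def r'_def mtm_ratio_Suc_nonneg mtm_ratio_Suc_le_1
        mtm_ratio_Suc_le mtm_ratio_Suc_antimono)
  then have "0 \<le> (1 - r') * mtm_gamma n (Suc k) l" "0 \<le> r' * (1 - real n * r) + real n * (r - r')"
    "0 \<le> real n * r'"
    using ge2.IH(2)[of l] by simp_all
  then show ?case
    unfolding mtm_gamma_Suc_Suc r_def[symmetric] r'_def[symmetric] by simp
qed simp_all

lemma mtm_gamma_sum:
  assumes "n > 0"
  shows "(\<Sum>l\<le>k. mtm_gamma n k l) = 1"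
proof (induction k rule: induct_nat_012)
  case (ge2 k)
  define r where "r = mtm_ratio n (Suc k)"
  define r' where "r' = mtm_ratio n (Suc (Suc k))"
  have "(\<Sum>l\<le>k. mtm_gamma n (Suc k) l) = 1 - real n * r"
    using ge2.IH(2) mtm_gamma_diag[OF assms, of k] by (simp add: r_def)
  then have "(\<Sum>l\<le>k. mtm_gamma n (Suc (Suc k)) l) = (1 - r') * (1 - real n * r)"
    by (simp add: mtm_gamma_Suc_Suc r'_def flip: sum_distrib_left)
  moreover have "mtm_gamma n (Suc (Suc k)) (Suc k) = r' * (1 - real n * r) + real n * (r - r')"
    "mtm_gamma n (Suc (Suc k)) (Suc (Suc k)) = real n * r'"
    by (simp_all add: mtm_gamma_Suc_Suc r_def r'_def)
  ultimately show ?case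
    by (simp add: algebra_simps)
qed simp_all

lemma mtm_gamma_unroll:
  fixes x u :: "nat \<Rightarrow> 'a::real_vector"
  assumes n: "n > 0"
    and x0: "x 0 = u 0"
    and x_Suc: "\<And>k. x (Suc k) = (1 - mtm_ratio n (Suc k)) *\<^sub>R x k + mtm_ratio n (Suc k) *\<^sub>R u k
      + (real n * mtm_ratio n (Suc k)) *\<^sub>R (u (Suc k) - u k)"
  shows "x k = (\<Sum>l\<le>k. mtm_gamma n k l *\<^sub>R u l)"
proof (induction k rule: induct_nat_012)
  case 0
  then show ?case by (simp add: x0)
next
  case 1
  show ?case
    using x_Suc[of 0] mtm_ratio_1[OF n] by (simp add: x0 algebra_simps)
next
  case (ge2 k)
  define r where "r = mtm_ratio n (Suc k)"
  define r' where "r' = mtm_ratio n (Suc (Suc k))"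
  define S where "S = (\<Sum>l\<le>k. mtm_gamma n (Suc k) l *\<^sub>R u l)"
  have x1: "x (Suc k) = S + (real n * r) *\<^sub>R u (Suc k)"
    using ge2.IH(2) by (simp add: S_def r_def mtm_gamma_diag[OF n])
  have low: "(\<Sum>l\<le>k. mtm_gamma n (Suc (Suc k)) l *\<^sub>R u l) = (1 - r') *\<^sub>R S"
    by (simp add: S_def r'_def mtm_gamma_Suc_Suc scaleR_sum_right)
  have mid: "mtm_gamma n (Suc (Suc k)) (Suc k) = r' * (1 - real n * r) + real n * (r - r')"
    and top: "mtm_gamma n (Suc (Suc k)) (Suc (Suc k)) = real n * r'"
    by (simp_all add: mtm_gamma_Suc_Suc r_def r'_def)
  have "x (Suc (Suc k)) = (1 - r') *\<^sub>R (S + (real n * r) *\<^sub>R u (Suc k))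
      + r' *\<^sub>R u (Suc k) + (real n * r') *\<^sub>R (u (Suc (Suc k)) - u (Suc k))"
    unfolding x_Suc[of "Suc k"] x1 r_def r'_def ..
  also have "\<dots> = (1 - r') *\<^sub>R S + (r' * (1 - real n * r) + real n * (r - r')) *\<^sub>R u (Suc k)
      + (real n * r') *\<^sub>R u (Suc (Suc k))"
    by (simp add: algebra_simps)
  also have "\<dots> = (\<Sum>l\<le>Suc (Suc k). mtm_gamma n (Suc (Suc k)) l *\<^sub>R u l)"
    by (simp add: low mid top)
  finally show ?case .
qed

lemma mtm_gamma_combination_in_convex_hull:
  fixes u :: "nat \<Rightarrow> 'a::real_vector"
  assumes "n > 0"
  shows "(\<Sum>l\<le>k. mtm_gamma n k l *\<^sub>R u l) \<in> convex hull (u ` {..k})"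
  using assms by (intro convex_sum) (simp_all add: mtm_gamma_sum mtm_gamma_nonneg hull_inc)

theorem lemma12:
  fixes x y u g :: "nat \<Rightarrow> real ^ 'n" and L :: real
  defines "n \<equiv> CARD('n)"
  assumes L_pos: "L > 0"
    and init: "x 0 = u 0" "y 0 = u 0"
    and y_step: "\<And>k. y (Suc k) =
        (1 / mtm_A n (Suc k)) *\<^sub>R (mtm_alpha n (Suc k) *\<^sub>R u k + mtm_A n k *\<^sub>R x k)"
    and u_step: "\<And>k. is_arg_min
        (\<lambda>z. (1/2) * (L * (norm (z - u k))^2) + mtm_alpha n (Suc k) * (g (Suc k) \<bullet> z))
        (\<lambda>_. True) (u (Suc k))"
    and x_step: "\<And>k. x (Suc k) = y (Suc k)
        + (real n * mtm_alpha n (Suc k) / mtm_A n (Suc k)) *\<^sub>R (u (Suc k) - u k)"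
  shows "\<forall>k. x (Suc k) \<in> convex hull (u ` {..Suc k})
           \<and> y (Suc k) \<in> convex hull (u ` {..Suc k})
           \<and> x (Suc k) = (\<Sum>l\<le>Suc k. mtm_gamma n (Suc k) l *\<^sub>R u l)"
proof -
  have n: "n > 0"
    by (simp add: n_def)
  have y_eq: "y (Suc k) = mtm_ratio n (Suc k) *\<^sub>R u k + (1 - mtm_ratio n (Suc k)) *\<^sub>R x k" for k
  proof -
    have "mtm_A n k = mtm_A n (Suc k) - mtm_alpha n (Suc k)"
      by simp
    then have "mtm_A n k / mtm_A n (Suc k) = 1 - mtm_ratio n (Suc k)"
      using mtm_A_Suc_pos[OF n, of k]
      by (simp add: mtm_ratio_def diff_divide_distrib del: mtm_A.simps mtm_alpha.simps)
    then show ?thesis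
      by (simp add: y_step mtm_ratio_def scaleR_add_right)
  qed
  have x_eq: "x k = (\<Sum>l\<le>k. mtm_gamma n k l *\<^sub>R u l)" for k
    using n init(1) by (rule mtm_gamma_unroll) (simp add: x_step y_eq mtm_ratio_def)
  have x_hull: "x k \<in> convex hull (u ` {..k})" for k
    unfolding x_eq by (rule mtm_gamma_combination_in_convex_hull[OF n])
  have y_hull: "y (Suc k) \<in> convex hull (u ` {..Suc k})" for k
  proof -
    have "convex hull (u ` {..k}) \<subseteq> convex hull (u ` {..Suc k})"
      by (rule hull_mono) auto
    then have "x k \<in> convex hull (u ` {..Suc k})"
      using x_hull by blast
    moreover have "u k \<in> convex hull (u ` {..Suc k})"
      by (simp add: hull_inc)
    ultimately show ?thesis
      unfolding y_eq using mtm_ratio_Suc_nonneg[OF n] mtm_ratio_Suc_le_1[OF n]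
      by (intro convexD) auto
  qed
  show ?thesis
    using x_eq x_hull y_hull by blast
qed

end
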